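(* The limit $\lim_{n\to\infty}\sqrt[n]{c_n}$ exists and equals $\limsup_{n\to\infty}\sqrt[n]{c_n}$.
   Context: A permutation (one-line notation) contains $321$ if there are $i<j<k$ with $\pi_i>\pi_j>\pi_k$. $\mathcal C_n$ is the set of cyclic permutations of $[n]$ (a single $n$-cycle), and $c_n=|\mathcal C_n(321)|$ is the number of cyclic permutations of $[n]$ avoiding $321$. *)

theory Defs
  imports "HOL-Combinatorics.Permutations" "HOL-Library.Extended_Real" Complex_Main
begin

text \<open>A permutation of [n] = {1..n} is a function p with p permutes {1..n}
(identity outside {1..n}); its one-line notation is p 1, ..., p n.\<close>

definition cyclic_perm :: "nat \<Rightarrow> (nat \<Rightarrow> nat) \<Rightarrow> bool" where
  "cyclic_perm n p \<longleftrightarrow> p permutes {1..n} \<and>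
     (\<forall>x\<in>{1..n}. \<forall>y\<in>{1..n}. \<exists>k. (p ^^ k) x = y)"

definition contains321 :: "nat \<Rightarrow> (nat \<Rightarrow> nat) \<Rightarrow> bool" where
  "contains321 n p \<longleftrightarrow>
     (\<exists>i j k. 1 \<le> i \<and> i < j \<and> j < k \<and> k \<le> n \<and> p i > p j \<and> p j > p k)"

definition c :: "nat \<Rightarrow> nat" where
  "c n = card {p. cyclic_perm n p \<and> \<not> contains321 n p}"

end

theory Submission
  imports Defs "HOL-Combinatorics.Orbits"
begin

text \<open>
  Gluing a 321-avoiding \<open>m\<close>-cycle and a 321-avoiding \<open>n\<close>-cycle side by side and exchanging
  the values \<open>m\<close> and \<open>m + 1\<close> yields, injectively, a 321-avoiding \<open>(m + n)\<close>-cycle; hence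
  \<open>c m * c n \<le> c (m + n)\<close>. Moreover \<open>1 \<le> c n \<le> 4 ^ n\<close>: the rotation \<open>i \<mapsto> i + 1\<close> is a
  321-avoiding cycle, and a 321-avoiding permutation is determined by the positions and the
  values of its left-to-right maxima. By Fekete's argument the \<open>n\<close>-th roots of a bounded
  supermultiplicative sequence converge to their supremum, and the limit of a convergent
  sequence is its limsup.
\<close>

section \<open>Fekete's lemma for supermultiplicative sequences\<close>

context
  fixes a :: "nat \<Rightarrow> real"
  assumes ge_one: "\<And>n. 1 \<le> a n"
    and supermult: "\<And>m n. a m * a n \<le> a (m + n)"
begin

lemma supermult_power_mult_le: "a m ^ q * a r \<le> a (q * m + r)"
proof (induction q)
  case (Suc q)
  have "a m ^ Suc q * a r = a m * (a m ^ q * a r)" by simp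
  also have "\<dots> \<le> a m * a (q * m + r)"
    using Suc ge_one[of m] by (intro mult_left_mono) auto
  also have "\<dots> \<le> a (Suc q * m + r)" using supermult by (simp add: add.assoc)
  finally show ?case .
qed simp

lemma supermult_power_div_le: "a m ^ (n div m) \<le> a n"
proof -
  have "a m ^ (n div m) * 1 \<le> a m ^ (n div m) * a (n mod m)"
    using ge_one[of m] ge_one[of "n mod m"] by (intro mult_left_mono) auto
  also have "\<dots> \<le> a n" using supermult_power_mult_le[of m "n div m" "n mod m"] by simp
  finally show ?thesis by simp
qed

lemma supermult_root_ge_one: "1 \<le> n \<Longrightarrow> 1 \<le> root n (a n)"
  using ge_one[of n] by simp

text \<open>Writing \<open>n = q m + r\<close> with \<open>r < m\<close>, the \<open>n\<close>-th root is at least the \<open>m\<close>-th root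
  raised to the power \<open>q m / n \<ge> 1 - m / n\<close>.\<close>
lemma supermult_root_lower_bound:
  assumes m: "1 \<le> m" and mn: "m \<le> n"
  shows "root m (a m) powr (1 - real m / real n) \<le> root n (a n)"
proof -
  define q where "q = n div m"
  have am: "1 \<le> a m" by (rule ge_one)
  have n: "1 \<le> n" using m mn by simp
  have "real n - real m \<le> real (q * m)"
    using div_mult_mod_eq[of n m] mod_less_divisor[of m n] m unfolding q_def by linarith
  then have expo: "1 - real m / real n \<le> real (q * m) / real n"
    using n divide_right_mono[of "real n - real m" "real (q * m)" "real n"]
    by (simp add: diff_divide_distrib)
  have "root m (a m) powr (1 - real m / real n) \<le> root m (a m) powr (real (q * m) / real n)"
    using supermult_root_ge_one[OF m] expo by (simp add: powr_mono)
  also have "\<dots> = (a m ^ q) powr (1 / real n)"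
    using m am by (simp add: root_powr_inverse powr_powr powr_realpow[symmetric])
  also have "\<dots> \<le> a n powr (1 / real n)"
    using supermult_power_div_le[of m n] am unfolding q_def by (intro powr_mono2) auto
  also have "\<dots> = root n (a n)"
    using n ge_one[of n] by (simp add: root_powr_inverse)
  finally show ?thesis .
qed

theorem supermult_root_tendsto_Sup:
  assumes bdd: "bdd_above ((\<lambda>n. root n (a n)) ` {1..})"
  shows "(\<lambda>n. root n (a n)) \<longlonglongrightarrow> (SUP n\<in>{1..}. root n (a n))"
    (is "?r \<longlonglongrightarrow> ?L")
proof (rule order_tendstoI)
  fix b assume "?L < b"
  moreover have "\<And>n. 1 \<le> n \<Longrightarrow> ?r n \<le> ?L" using bdd by (auto intro: cSUP_upper)
  ultimately show "eventually (\<lambda>n. ?r n < b) sequentially"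
    unfolding eventually_sequentially by (meson order.strict_trans1)
next
  fix b assume "b < ?L"
  then obtain m where m: "1 \<le> m" "b < ?r m" using less_cSUP_iff[OF _ bdd] by auto
  have "(\<lambda>n. ?r m powr (1 - real m / real n)) \<longlonglongrightarrow> ?r m powr (1 - 0)"
    using supermult_root_ge_one[OF m(1)] by (intro tendsto_intros) auto
  then have "eventually (\<lambda>n. b < ?r m powr (1 - real m / real n)) sequentially"
    using m(2) supermult_root_ge_one[OF m(1)] by (auto dest: order_tendstoD)
  with eventually_ge_at_top[of m] show "eventually (\<lambda>n. b < ?r n) sequentially"
    by eventually_elim (use supermult_root_lower_bound m(1) in fastforce)
qed

end


section \<open>Bounds on the number of 321-avoiding cycles\<close>

definition cyclic_avoiders :: "nat \<Rightarrow> (nat \<Rightarrow> nat) set" where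
  "cyclic_avoiders n = {p. cyclic_perm n p \<and> \<not> contains321 n p}"

lemma c_eq_card_cyclic_avoiders: "c n = card (cyclic_avoiders n)"
  unfolding c_def cyclic_avoiders_def ..

lemma finite_cyclic_avoiders: "finite (cyclic_avoiders n)"
  by (rule finite_subset[OF _ finite_permutations[of "{1..n}"]])
     (auto simp: cyclic_avoiders_def cyclic_perm_def)

definition rotation :: "nat \<Rightarrow> nat \<Rightarrow> nat" where
  "rotation n i = (if 1 \<le> i \<and> i < n then i + 1 else if i = n \<and> 1 \<le> n then 1 else i)"

lemma rotation_permutes: "rotation n permutes {1..n}"
proof (rule bij_imp_permutes)
  have inj: "inj_on (rotation n) {1..n}" by (auto simp: inj_on_def rotation_def split: if_splits)
  moreover have "rotation n ` {1..n} \<subseteq> {1..n}" by (auto simp: rotation_def)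
  ultimately show "bij_betw (rotation n) {1..n} {1..n}" by (simp add: bij_betw_def endo_inj_surj)
qed (auto simp: rotation_def)

lemma funpow_rotation: "1 \<le> x \<Longrightarrow> x + k \<le> n \<Longrightarrow> (rotation n ^^ k) x = x + k"
  by (induction k) (auto simp: rotation_def)

lemma cyclic_perm_rotation: "cyclic_perm n (rotation n)"
  unfolding cyclic_perm_def
proof (intro conjI rotation_permutes ballI)
  fix x y assume x: "x \<in> {1..n}" and y: "y \<in> {1..n}"
  have to_1: "(rotation n ^^ Suc (n - x)) x = 1"
    using x funpow_rotation[of x "n - x" n] by (simp add: rotation_def)
  have from_1: "(rotation n ^^ (y - 1)) 1 = y" using y funpow_rotation[of 1 "y - 1" n] by auto
  have "(rotation n ^^ (y - 1 + Suc (n - x))) x = y"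
    by (simp only: funpow_add comp_apply to_1 from_1)
  then show "\<exists>k. (rotation n ^^ k) x = y" by blast
qed

lemma rotation_avoids_321: "\<not> contains321 n (rotation n)"
  unfolding contains321_def rotation_def by auto

lemma rotation_in_cyclic_avoiders: "rotation n \<in> cyclic_avoiders n"
  unfolding cyclic_avoiders_def using cyclic_perm_rotation rotation_avoids_321 by blast

lemma c_ge_one: "1 \<le> c n"
  using rotation_in_cyclic_avoiders finite_cyclic_avoiders
  by (auto simp: c_eq_card_cyclic_avoiders Suc_le_eq card_gt_0_iff)

lemma c_0: "c 0 = 1"
proof -
  have "cyclic_avoiders 0 \<subseteq> {id}" by (auto simp: cyclic_avoiders_def cyclic_perm_def)
  with rotation_in_cyclic_avoiders[of 0] have "cyclic_avoiders 0 = {id}" by auto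
  then show ?thesis by (simp add: c_eq_card_cyclic_avoiders)
qed

definition ltr_maxima :: "nat \<Rightarrow> (nat \<Rightarrow> nat) \<Rightarrow> nat set" where
  "ltr_maxima n p = {i\<in>{1..n}. \<forall>j\<in>{1..<i}. p j < p i}"

lemma ltr_maxima_subset: "ltr_maxima n p \<subseteq> {1..n}"
  by (auto simp: ltr_maxima_def)

lemma non_ltr_maxima_increasing:
  assumes p: "p permutes {1..n}" and av: "\<not> contains321 n p"
    and j: "j \<in> {1..n}" "j \<notin> ltr_maxima n p" and i: "i \<in> {1..n}" and ji: "j < i"
  shows "p j < p i"
proof -
  have inj: "inj p" using p by (rule permutes_inj)
  obtain h where h: "h \<in> {1..<j}" "\<not> p h < p j" using j unfolding ltr_maxima_def by auto
  with inj have "p j < p h" by (metis linorder_neqE_nat injD less_irrefl atLeastLessThan_iff)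
  with av h ji i have "\<not> p i < p j" unfolding contains321_def by force
  moreover have "p j \<noteq> p i" using ji inj by (auto dest: injD)
  ultimately show ?thesis by simp
qed

lemma ltr_maximum_eq_Least:
  assumes "i \<in> ltr_maxima n p"
  shows "p i = (LEAST v. v \<in> p ` ltr_maxima n p \<and> (\<forall>j\<in>{1..<i}. p j < v))"
proof (rule Least_equality[symmetric])
  fix v assume v: "v \<in> p ` ltr_maxima n p \<and> (\<forall>j\<in>{1..<i}. p j < v)"
  then obtain h where h: "h \<in> ltr_maxima n p" "v = p h" by auto
  consider "h < i" | "h = i" | "i < h" by linarith
  then show "p i \<le> v"
    using v h assms by cases (auto simp: ltr_maxima_def intro: less_imp_le)
qed (use assms in \<open>auto simp: ltr_maxima_def\<close>)

lemma non_ltr_maximum_eq_Least: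
  assumes p: "p permutes {1..n}" and av: "\<not> contains321 n p"
    and i: "i \<in> {1..n}" "i \<notin> ltr_maxima n p"
  shows "p i = (LEAST v. v \<in> {1..n} - p ` ltr_maxima n p \<and>
                   (\<forall>j\<in>{1..<i}. j \<notin> ltr_maxima n p \<longrightarrow> p j < v))"
proof (rule Least_equality[symmetric])
  show "p i \<in> {1..n} - p ` ltr_maxima n p \<and> (\<forall>j\<in>{1..<i}. j \<notin> ltr_maxima n p \<longrightarrow> p j < p i)"
    using i p non_ltr_maxima_increasing[OF p av _ _ i(1)] permutes_in_image[OF p, of i]
    by (auto dest: injD[OF permutes_inj[OF p]])
next
  fix v assume v: "v \<in> {1..n} - p ` ltr_maxima n p \<and>
                     (\<forall>j\<in>{1..<i}. j \<notin> ltr_maxima n p \<longrightarrow> p j < v)"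
  then have "v \<in> p ` {1..n}" using permutes_image[OF p] by blast
  then obtain h where h: "h \<in> {1..n}" "v = p h" by blast
  have "h \<notin> ltr_maxima n p" using v h by auto
  consider "h < i" | "h = i" | "i < h" by linarith
  then show "p i \<le> v"
    using v h \<open>h \<notin> ltr_maxima n p\<close> non_ltr_maxima_increasing[OF p av i h(1)]
    by cases auto
qed

text \<open>A 321-avoiding permutation is determined by the positions and the values of its
  left-to-right maxima: the remaining values fill the remaining positions increasingly.\<close>
lemma avoids_321_eqI:
  assumes p: "p permutes {1..n}" "\<not> contains321 n p"
    and q: "q permutes {1..n}" "\<not> contains321 n q"
    and pos: "ltr_maxima n p = ltr_maxima n q" and val: "p ` ltr_maxima n p = q ` ltr_maxima n q"
  shows "p = q"
proof
  fix i
  show "p i = q i"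
  proof (cases "i \<in> {1..n}")
    case True
    then show ?thesis
    proof (induction i rule: less_induct)
      case (less i)
      then have below: "\<forall>j\<in>{1..<i}. p j = q j" by auto
      show ?case
      proof (cases "i \<in> ltr_maxima n p")
        case True
        have "p i = (LEAST v. v \<in> p ` ltr_maxima n p \<and> (\<forall>j\<in>{1..<i}. p j < v))"
          using True by (rule ltr_maximum_eq_Least)
        also have "\<dots> = (LEAST v. v \<in> q ` ltr_maxima n q \<and> (\<forall>j\<in>{1..<i}. q j < v))"
          using below val by simp
        also have "\<dots> = q i"
          using True pos by (intro ltr_maximum_eq_Least[symmetric]) simp
        finally show ?thesis .
      next
        case False
        have "p i = (LEAST v. v \<in> {1..n} - p ` ltr_maxima n p \<and>
                        (\<forall>j\<in>{1..<i}. j \<notin> ltr_maxima n p \<longrightarrow> p j < v))"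
          using p less.prems False by (rule non_ltr_maximum_eq_Least)
        also have "\<dots> = (LEAST v. v \<in> {1..n} - q ` ltr_maxima n q \<and>
                        (\<forall>j\<in>{1..<i}. j \<notin> ltr_maxima n q \<longrightarrow> q j < v))"
          using below pos val by simp
        also have "\<dots> = q i"
          using q less.prems False pos by (intro non_ltr_maximum_eq_Least[symmetric]) simp_all
        finally show ?thesis .
      qed
    qed
  qed (use p q in \<open>simp add: permutes_not_in\<close>)
qed

lemma card_avoiding_321_le: "card {p. p permutes {1..n} \<and> \<not> contains321 n p} \<le> 4 ^ n"
proof -
  let ?A = "{p. p permutes {1..n} \<and> \<not> contains321 n p}"
  let ?code = "\<lambda>p. (ltr_maxima n p, p ` ltr_maxima n p)"
  have "inj_on ?code ?A" by (auto intro!: inj_onI avoids_321_eqI)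
  moreover have "?code ` ?A \<subseteq> Pow {1..n} \<times> Pow {1..n}"
  proof -
    have "p ` ltr_maxima n p \<subseteq> {1..n}" if "p permutes {1..n}" for p
      using ltr_maxima_subset permutes_image[OF that] by blast
    then show ?thesis using ltr_maxima_subset by blast
  qed
  ultimately have "card ?A \<le> card (Pow {1..n} \<times> Pow {1..n :: nat})"
    by (intro card_inj_on_le) auto
  also have "\<dots> = 4 ^ n"
    by (simp add: card_cartesian_product card_Pow power_mult_distrib[symmetric])
  finally show ?thesis .
qed

lemma c_le_4_pow: "c n \<le> 4 ^ n"
proof -
  have "cyclic_avoiders n \<subseteq> {p. p permutes {1..n} \<and> \<not> contains321 n p}"
    by (auto simp: cyclic_avoiders_def cyclic_perm_def)
  moreover have "finite {p. p permutes {1..n} \<and> \<not> contains321 n p}"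
    by (rule finite_subset[OF _ finite_permutations[of "{1..n}"]]) auto
  ultimately have "c n \<le> card {p. p permutes {1..n} \<and> \<not> contains321 n p}"
    unfolding c_eq_card_cyclic_avoiders by (rule card_mono[rotated])
  with card_avoiding_321_le[of n] show ?thesis by linarith
qed


section \<open>Supermultiplicativity by gluing\<close>

lemma cyclic_perm_iff_orbit:
  "cyclic_perm n p \<longleftrightarrow> p permutes {1..n} \<and> (\<forall>x\<in>{1..n}. \<forall>y\<in>{1..n}. y \<in> orbit p x)"
proof -
  have "p permutes {1..n} \<Longrightarrow> y \<in> orbit p x \<longleftrightarrow> (\<exists>k. (p ^^ k) x = y)" for x y
    using permutes_imp_permutation[of "{1..n}" p] by (auto simp: orbit_altdef_permutation)
  then show ?thesis unfolding cyclic_perm_def by blast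
qed

lemma orbit_simulation:
  assumes t: "t \<in> orbit g x" and x: "x \<in> A" and A: "g ` A \<subseteq> A"
    and step: "\<And>z. z \<in> A \<Longrightarrow> g z \<noteq> t \<Longrightarrow> f (h z) = h (g z)"
    and exit: "\<And>z. z \<in> A \<Longrightarrow> g z = t \<Longrightarrow> f (h z) = t'"
  shows "t' \<in> orbit f (h x)"
proof -
  from t obtain k where "(g ^^ Suc k) x = t" by (auto simp: orbit_altdef gr0_conv_Suc)
  with x show ?thesis
  proof (induction k arbitrary: x)
    case 0
    then show ?case using exit orbit.base by fastforce
  next
    case (Suc k)
    show ?case
    proof (cases "g x = t")
      case True
      then show ?thesis using exit Suc.prems(1) orbit.base by metis
    next
      case False
      have "(g ^^ Suc k) (g x) = t"
        using Suc.prems(2) by (simp add: funpow_Suc_right del: funpow.simps)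
      then have "t' \<in> orbit f (h (g x))" using Suc.IH A Suc.prems(1) by blast
      then show ?thesis using step[OF Suc.prems(1) False] by (metis orbit_subset)
    qed
  qed
qed

definition shift :: "nat \<Rightarrow> (nat \<Rightarrow> nat) \<Rightarrow> nat \<Rightarrow> nat" where
  "shift m t i = (if i \<le> m then i else t (i - m) + m)"

text \<open>In one-line notation, \<open>glue m s t\<close> is \<open>s\<close> followed by \<open>t\<close> shifted up by \<open>m\<close>, with
  the values \<open>m\<close> and \<open>m + 1\<close> exchanged. The exchange merges the two cycles into one, and no
  321 pattern can straddle the two blocks since the first block takes values \<open>\<le> m + 1\<close> and
  the second values \<open>\<ge> m\<close>.\<close>
definition glue :: "nat \<Rightarrow> (nat \<Rightarrow> nat) \<Rightarrow> (nat \<Rightarrow> nat) \<Rightarrow> nat \<Rightarrow> nat" where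
  "glue m s t = transpose m (Suc m) \<circ> s \<circ> shift m t"

lemma shift_permutes:
  assumes t: "t permutes {1..n}"
  shows "shift m t permutes {m+1..m+n}"
proof (rule bij_imp_permutes)
  have "inj_on (shift m t) {m+1..m+n}"
  proof (rule inj_onI)
    fix x y assume "x \<in> {m+1..m+n}" "y \<in> {m+1..m+n}" "shift m t x = shift m t y"
    then show "x = y" using permutes_inj[OF t] by (auto simp: shift_def dest: injD)
  qed
  moreover have "shift m t ` {m+1..m+n} \<subseteq> {m+1..m+n}"
  proof
    fix y assume "y \<in> shift m t ` {m+1..m+n}"
    then obtain x where x: "x \<in> {m+1..m+n}" "y = shift m t x" by auto
    then have "t (x - m) \<in> {1..n}" using permutes_in_image[OF t, of "x - m"] by auto
    then show "y \<in> {m+1..m+n}" using x by (auto simp: shift_def)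
  qed
  ultimately show "bij_betw (shift m t) {m+1..m+n} {m+1..m+n}"
    by (simp add: bij_betw_def endo_inj_surj)
next
  fix x assume "x \<notin> {m+1..m+n}"
  then have "x \<le> m \<or> x - m \<notin> {1..n}" by auto
  then show "shift m t x = x"
    using permutes_not_in[OF t, of "x - m"] by (auto simp: shift_def)
qed

lemma glue_permutes:
  assumes s: "s permutes {1..m}" and t: "t permutes {1..n}" and "1 \<le> m" "1 \<le> n"
  shows "glue m s t permutes {1..m+n}"
proof -
  have "shift m t permutes {1..m+n}" by (rule permutes_subset[OF shift_permutes[OF t]]) auto
  moreover have "s permutes {1..m+n}" by (rule permutes_subset[OF s]) auto
  moreover have "transpose m (Suc m) permutes {1..m+n}"
    using assms by (intro permutes_swap_id) auto
  ultimately show ?thesis unfolding glue_def by (intro permutes_compose)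
qed

lemma glue_left:
  assumes s: "s permutes {1..m}" and i: "i \<in> {1..m}"
  shows "glue m s t i = (if s i = m then Suc m else s i)"
  using i permutes_in_image[OF s, of i] by (auto simp: glue_def shift_def transpose_def)

lemma glue_right:
  assumes s: "s permutes {1..m}" and t: "t permutes {1..n}" and j: "j \<in> {1..n}"
  shows "glue m s t (j + m) = (if t j = 1 then m else t j + m)"
proof -
  have "t j \<in> {1..n}" using permutes_in_image[OF t] j by simp
  moreover from this have "s (t j + m) = t j + m" using permutes_not_in[OF s] by simp
  ultimately show ?thesis using j by (auto simp: glue_def shift_def transpose_def)
qed

lemma glue_avoids_321:
  assumes s: "s permutes {1..m}" "\<not> contains321 m s"
    and t: "t permutes {1..n}" "\<not> contains321 n t"
  shows "\<not> contains321 (m + n) (glue m s t)"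
proof
  let ?p = "glue m s t"
  assume "contains321 (m + n) ?p"
  then obtain i j k where ijk: "1 \<le> i" "i < j" "j < k" "k \<le> m + n"
    and desc: "?p j < ?p i" "?p k < ?p j" unfolding contains321_def by auto
  have left: "?p x = (if s x = m then Suc m else s x) \<and> s x \<in> {1..m}" if "x \<in> {1..m}" for x
    using glue_left[OF s(1) that] permutes_in_image[OF s(1)] that by simp
  have right: "?p x = (if t (x - m) = 1 then m else t (x - m) + m) \<and> t (x - m) \<in> {1..n}"
    if "x \<in> {m+1..m+n}" for x
    using glue_right[OF s(1) t(1), of "x - m"] permutes_in_image[OF t(1), of "x - m"] that by auto
  consider "k \<le> m" | "m < i" | "i \<le> m" "m < k" by linarith
  then show False
  proof cases
    case 1
    then have "s j < s i" "s k < s j"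
      using desc left[of i] left[of j] left[of k] ijk by (auto split: if_splits)
    then have "contains321 m s" unfolding contains321_def using ijk 1 by blast
    with s(2) show False ..
  next
    case 2
    then have "t (j - m) < t (i - m)" "t (k - m) < t (j - m)"
      using desc right[of i] right[of j] right[of k] ijk by (auto split: if_splits)
    moreover have "1 \<le> i - m" "i - m < j - m" "j - m < k - m" "k - m \<le> n" using 2 ijk by auto
    ultimately have "contains321 n t" unfolding contains321_def by blast
    with t(2) show False ..
  next
    case 3
    then have "?p i \<le> Suc m" "m \<le> ?p k" using left[of i] right[of k] ijk by auto
    with desc show False by linarith
  qed
qed

lemma glue_cyclic:
  assumes s: "cyclic_perm m s" and t: "cyclic_perm n t" and m: "1 \<le> m" and n: "1 \<le> n"
  shows "cyclic_perm (m + n) (glue m s t)"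
proof -
  let ?p = "glue m s t"
  have sp: "s permutes {1..m}" and tp: "t permutes {1..n}"
    using s t by (auto simp: cyclic_perm_def)
  have pp: "?p permutes {1..m+n}" using glue_permutes[OF sp tp m n] .
  have left_to_Suc_m: "Suc m \<in> orbit ?p x" if x: "x \<in> {1..m}" for x
  proof -
    have "m \<in> orbit s x" using s x m by (simp add: cyclic_perm_iff_orbit)
    then have "Suc m \<in> orbit ?p (id x)"
      by (rule orbit_simulation[of m s x "{1..m}" ?p id])
         (use x permutes_image[OF sp] glue_left[OF sp] in auto)
    then show ?thesis by simp
  qed
  have right_to_m: "m \<in> orbit ?p (x + m)" if x: "x \<in> {1..n}" for x
  proof -
    have "1 \<in> orbit t x" using t x n by (simp add: cyclic_perm_iff_orbit)
    then show ?thesis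
      by (rule orbit_simulation[of 1 t x "{1..n}" ?p "\<lambda>z. z + m"])
         (use x permutes_image[OF tp] glue_right[OF sp tp] in auto)
  qed
  have to_m: "m \<in> orbit ?p x" if x: "x \<in> {1..m+n}" for x
  proof (cases "x \<le> m")
    case True
    then have "Suc m \<in> orbit ?p x" using x left_to_Suc_m by simp
    moreover have "m \<in> orbit ?p (Suc m)" using right_to_m[of 1] n by simp
    ultimately show ?thesis by (rule orbit_trans[rotated])
  next
    case False
    then have "x - m \<in> {1..n}" "x - m + m = x" using x by auto
    then show ?thesis using right_to_m[of "x - m"] by simp
  qed
  have perm: "permutation ?p" using pp by (rule permutes_imp_permutation[rotated]) simp
  show ?thesis unfolding cyclic_perm_iff_orbit
  proof (intro conjI pp ballI)
    fix x y assume "x \<in> {1..m+n}" "y \<in> {1..m+n}"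
    then have "y \<in> orbit ?p m" "m \<in> orbit ?p x"
      using to_m orbit_swap[OF permutation_self_in_orbit[OF perm]] by blast+
    then show "y \<in> orbit ?p x" by (rule orbit_trans)
  qed
qed

lemma glue_inj:
  assumes s: "s permutes {1..m}" "s' permutes {1..m}"
    and t: "t permutes {1..n}" "t' permutes {1..n}"
    and eq: "glue m s t = glue m s' t'"
  shows "s = s' \<and> t = t'"
proof
  show "s = s'"
  proof
    fix i show "s i = s' i"
    proof (cases "i \<in> {1..m}")
      case True
      then show ?thesis
        using glue_left[OF s(1) True, of t] glue_left[OF s(2) True, of t'] eq
          permutes_in_image[OF s(1), of i] permutes_in_image[OF s(2), of i]
        by (auto split: if_splits)
    qed (use s in \<open>simp add: permutes_not_in\<close>)
  qed
  show "t = t'"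
  proof
    fix i show "t i = t' i"
    proof (cases "i \<in> {1..n}")
      case True
      then show ?thesis
        using glue_right[OF s(1) t(1) True] glue_right[OF s(2) t(2) True] eq
          permutes_in_image[OF t(1), of i] permutes_in_image[OF t(2), of i]
        by (auto split: if_splits)
    qed (use t in \<open>simp add: permutes_not_in\<close>)
  qed
qed

lemma c_supermult: "c m * c n \<le> c (m + n)"
proof -
  consider "m = 0" | "n = 0" | "1 \<le> m" "1 \<le> n" by linarith
  then show ?thesis
  proof cases
    case 3
    let ?glue = "\<lambda>(s, t). glue m s t"
    have "inj_on ?glue (cyclic_avoiders m \<times> cyclic_avoiders n)"
    proof (rule inj_onI)
      fix x y assume "x \<in> cyclic_avoiders m \<times> cyclic_avoiders n"
        "y \<in> cyclic_avoiders m \<times> cyclic_avoiders n" "?glue x = ?glue y"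
      moreover obtain s t s' t' where "x = (s, t)" "y = (s', t')" by fastforce
      ultimately show "x = y"
        using glue_inj[of s m s' t n t'] by (auto simp: cyclic_avoiders_def cyclic_perm_def)
    qed
    moreover have "?glue ` (cyclic_avoiders m \<times> cyclic_avoiders n) \<subseteq> cyclic_avoiders (m + n)"
      using 3 glue_cyclic glue_avoids_321
      by (auto simp: cyclic_avoiders_def cyclic_perm_def[of m] cyclic_perm_def[of n])
    ultimately have "card (cyclic_avoiders m \<times> cyclic_avoiders n) \<le> card (cyclic_avoiders (m + n))"
      using finite_cyclic_avoiders by (intro card_inj_on_le) auto
    then show ?thesis by (simp add: c_eq_card_cyclic_avoiders card_cartesian_product)
  qed (simp_all add: c_0)
qed

lemma root_c_le_4: "1 \<le> n \<Longrightarrow> root n (real (c n)) \<le> 4"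
proof -
  assume n: "1 \<le> n"
  have "real (c n) \<le> 4 ^ n" using c_le_4_pow[of n] by (simp flip: of_nat_power)
  then have "root n (real (c n)) \<le> root n (4 ^ n)" using n by simp
  also have "\<dots> = 4" using n by (simp add: real_root_power_cancel)
  finally show ?thesis .
qed

theorem mainTheorem9:
  shows "\<exists>L::real. (\<lambda>n. root n (real (c n))) \<longlonglongrightarrow> L \<and>
           ereal L = limsup (\<lambda>n. ereal (root n (real (c n))))"
proof -
  let ?L = "SUP n\<in>{1..}. root n (real (c n))"
  have "(\<lambda>n. root n (real (c n))) \<longlonglongrightarrow> ?L"
  proof (rule supermult_root_tendsto_Sup)
    show "1 \<le> real (c n)" for n using c_ge_one[of n] by simp
    show "real (c m) * real (c n) \<le> real (c (m + n))" for m n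
      using c_supermult[of m n] by (simp flip: of_nat_mult)
    show "bdd_above ((\<lambda>n. root n (real (c n))) ` {1..})"
      using root_c_le_4 by (intro bdd_aboveI[of _ 4]) auto
  qed
  moreover from this have "limsup (\<lambda>n. ereal (root n (real (c n)))) = ereal ?L"
    by (intro lim_imp_Limsup) auto
  ultimately show ?thesis by auto
qed

end
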